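(* Let $\Gamma$ be a group, let $\Delta \subset \Gamma$ be a finite index normal subgroup, and let $r_1, r_2 : \Gamma \to \mathrm{GL}_n(\overline{\mathbb{Q}}_p)$ be representations such that $r_1|_\Delta = r_2|_\Delta \otimes \chi$ for some character $\chi : \Delta \to \overline{\mathbb{Q}}_p^\times$. Suppose that for every finite index subgroup $\Delta' \subset \Gamma$, $r_1|_{\Delta'}$ is irreducible. Then $\chi$ extends to a character $\chi' : \Gamma \to \overline{\mathbb{Q}}_p^\times$ such that $r_1 = r_2 \otimes \chi'$. *)

theory Defs
  imports "HOL-Analysis.Analysis" "HOL-Algebra.Coset"
begin

text \<open>GL_n over an algebraically closed field of characteristic 0 is modelled by invertible
  n x n complex matrices (the abstract field of algebraic closure of Q_p is isomorphic to C);
  n is the cardinality of the finite index type 'n.\<close>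

definition is_rep :: "('g, 'b) monoid_scheme \<Rightarrow> ('g \<Rightarrow> complex^'n^'n) \<Rightarrow> bool" where
  "is_rep G r \<longleftrightarrow> (\<forall>g\<in>carrier G. invertible (r g)) \<and>
     (\<forall>g\<in>carrier G. \<forall>h\<in>carrier G. r (g \<otimes>\<^bsub>G\<^esub> h) = r g ** r h)"

definition is_char_on :: "('g, 'b) monoid_scheme \<Rightarrow> 'g set \<Rightarrow> ('g \<Rightarrow> complex) \<Rightarrow> bool" where
  "is_char_on G H chi \<longleftrightarrow> (\<forall>h\<in>H. chi h \<noteq> 0) \<and>
     (\<forall>g\<in>H. \<forall>h\<in>H. chi (g \<otimes>\<^bsub>G\<^esub> h) = chi g * chi h)"

definition twist :: "('g \<Rightarrow> complex^'n^'n) \<Rightarrow> ('g \<Rightarrow> complex) \<Rightarrow> 'g \<Rightarrow> complex^'n^'n" where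
  "twist r chi g = (\<chi> i j. chi g * (r g $ i $ j))"

definition csubspace_vec :: "(complex^'n) set \<Rightarrow> bool" where
  "csubspace_vec W \<longleftrightarrow> 0 \<in> W \<and> (\<forall>x\<in>W. \<forall>y\<in>W. x + y \<in> W) \<and> (\<forall>c. \<forall>x\<in>W. c *s x \<in> W)"

definition irreducible_on :: "'g set \<Rightarrow> ('g \<Rightarrow> complex^'n^'n) \<Rightarrow> bool" where
  "irreducible_on H r \<longleftrightarrow> (\<forall>W. csubspace_vec W \<and> (\<forall>h\<in>H. \<forall>w\<in>W. r h *v w \<in> W)
       \<longrightarrow> W = {0} \<or> W = UNIV)"

end

theory Submission
  imports Defs "HOL-Computational_Algebra.Fundamental_Theorem_Algebra"
begin

text \<open>Fix \<open>g\<close> and put \<open>Y = r2(g)\<inverse> r1(g)\<close>. Conjugating the identity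
  \<open>r1 = \<chi> r2\<close> on \<open>D\<close> by \<open>g\<close> gives \<open>Y r2(d) = \<mu>(d) r2(d) Y\<close>
  with \<open>\<mu>(d) = \<chi>(g d g\<inverse>) / \<chi>(d)\<close>, and taking determinants shows that \<open>\<mu>\<close>
  takes values in the \<open>n\<close>-th roots of unity. Hence the kernel \<open>H\<close> of \<open>\<mu>\<close> has
  finite index in \<open>G\<close>, so \<open>r1\<close> is irreducible on \<open>H\<close>; as \<open>Y\<close> commutes with
  \<open>r1(H)\<close>, Schur's lemma makes \<open>Y\<close> a scalar \<open>\<psi>(g)\<close>. The scalars \<open>\<psi>(g)\<close>
  then form the required character.\<close>

definition smult_mat :: "'a::times \<Rightarrow> 'a^'n^'m \<Rightarrow> 'a^'n^'m" where
  "smult_mat c A = (\<chi> i j. c * A$i$j)"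

lemma twist_eq_smult_mat: "twist r chi g = smult_mat (chi g) (r g)"
  by (simp add: twist_def smult_mat_def)

lemma smult_mat_mult_left:
  "smult_mat c A ** B = smult_mat c (A ** B :: 'a::comm_semiring_1^'n^'m)"
  by (simp add: smult_mat_def matrix_matrix_mult_def vec_eq_iff sum_distrib_left mult.assoc)

lemma smult_mat_mult_right:
  "A ** smult_mat c B = smult_mat c (A ** B :: 'a::comm_semiring_1^'n^'m)"
  by (simp add: smult_mat_def matrix_matrix_mult_def vec_eq_iff sum_distrib_left mult_ac)

lemma smult_mat_smult_mat:
  "smult_mat c (smult_mat d A) = smult_mat (c * d) (A :: 'a::semigroup_mult^'n^'m)"
  by (simp add: smult_mat_def vec_eq_iff mult.assoc)

lemma smult_mat_1 [simp]: "smult_mat 1 A = (A :: 'a::monoid_mult^'n^'m)"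
  by (simp add: smult_mat_def vec_eq_iff)

lemma mat_mult_vec: "mat c *v v = c *s (v :: 'a::semiring_1^'n)"
  by (simp add: mat_def matrix_vector_mult_def vec_eq_iff if_distrib[of "\<lambda>x. x * y" for y]
      cong: if_cong)

lemma matrix_mul_mat: "A ** mat c = smult_mat c (A :: 'a::comm_semiring_1^'n^'m)"
  by (simp add: smult_mat_def mat_def matrix_matrix_mult_def vec_eq_iff mult.commute
      if_distrib[of "\<lambda>x. y * x" for y] cong: if_cong)

lemma det_smult_mat: "det (smult_mat c A) = c ^ CARD('n) * det (A :: 'a::comm_ring_1^'n^'n)"
proof -
  have "smult_mat c A = (\<chi> i. c *s A$i)"
    by (simp add: smult_mat_def vec_eq_iff)
  then show ?thesis
    using det_rows_mul[of "\<lambda>_. c" "\<lambda>i. A$i"] by simp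
qed

lemma smult_mat_cancel:
  fixes A :: "'a::comm_semiring_1^'n^'n"
  assumes "invertible A" and "smult_mat c A = smult_mat d A"
  shows "c = d"
proof -
  obtain A' where "A ** A' = mat 1"
    using assms(1) unfolding invertible_def by blast
  then have "smult_mat c (mat 1) = (smult_mat d (mat 1) :: 'a^'n^'n)"
    using arg_cong[OF assms(2), of "\<lambda>M. M ** A'"] by (simp add: smult_mat_mult_left)
  then have "smult_mat c (mat 1) $ i $ i = (smult_mat d (mat 1) :: 'a^'n^'n) $ i $ i" for i
    by simp
  then show ?thesis
    by (simp add: smult_mat_def mat_def)
qed

text \<open>Sign convention: \<open>charpoly Y = det (Y - X I)\<close>, i.e. \<open>(-1)\<^sup>n\<close> times the usual
  characteristic polynomial.\<close>

definition charpoly :: "'a::idom^'n^'n \<Rightarrow> 'a poly" where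
  "charpoly Y = (\<Sum>p | p permutes (UNIV::'n set).
     of_int (sign p) * (\<Prod>i\<in>UNIV. [:Y$i$(p i), if i = p i then -1 else 0:]))"

lemma poly_charpoly: "poly (charpoly Y) c = det (Y - mat c)"
  unfolding charpoly_def det_def poly_sum poly_prod
  by (intro sum.cong refl) (auto intro!: prod.cong simp: mat_def poly_prod)

lemma coeff_charpoly_card: "coeff (charpoly (Y::'a::idom^'n^'n)) CARD('n) = (-1) ^ CARD('n)"
proof -
  define f where "f p i = [:Y$i$(p i), if i = p i then -1 else 0:]" for p and i :: 'n
  have off_diagonal: "coeff (\<Prod>i\<in>UNIV. f p i) CARD('n) = 0" if "p \<noteq> id" for p
  proof -
    obtain k where k: "p k \<noteq> k" using \<open>p \<noteq> id\<close> by (metis eq_id_iff)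
    have "degree (\<Prod>i\<in>UNIV. f p i) \<le> (\<Sum>i\<in>UNIV. degree (f p i))"
      using degree_prod_sum_le[of UNIV "f p"] by (simp add: o_def)
    also have "\<dots> = (\<Sum>i\<in>UNIV - {k}. degree (f p i))"
      using k by (intro sum.mono_neutral_right) (auto simp: f_def)
    also have "\<dots> \<le> (\<Sum>i\<in>UNIV - {k}. 1)"
      by (rule sum_mono) (simp add: f_def)
    also have "\<dots> < CARD('n)" by (simp add: card_Diff_singleton)
    finally show ?thesis by (simp add: coeff_eq_0)
  qed
  have "degree (\<Prod>i\<in>UNIV. f id i) = CARD('n)"
    by (subst degree_prod_eq_sum_degree) (auto simp: f_def)
  moreover have "lead_coeff (\<Prod>i\<in>UNIV. f id i) = (\<Prod>i\<in>UNIV. lead_coeff (f id i))"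
    by (rule lead_coeff_prod)
  ultimately have diagonal: "coeff (\<Prod>i\<in>UNIV. f id i) CARD('n) = (-1) ^ CARD('n)"
    by (simp add: f_def)
  have "coeff (charpoly Y) CARD('n) =
        (\<Sum>p | p permutes (UNIV::'n set). of_int (sign p) * coeff (\<Prod>i\<in>UNIV. f p i) CARD('n))"
    unfolding charpoly_def f_def coeff_sum by (simp add: of_int_poly)
  also have "\<dots> = of_int (sign (id::'n \<Rightarrow> 'n)) * coeff (\<Prod>i\<in>UNIV. f id i) CARD('n)"
    by (rule sum.mono_neutral_left[symmetric, where S = "{id}", simplified])
       (auto simp: off_diagonal permutes_id)
  finally show ?thesis by (simp add: diagonal sign_id)
qed

lemma complex_matrix_has_eigenvector:
  fixes Y :: "complex^'n^'n"
  obtains c v where "v \<noteq> 0" "Y *v v = c *s v"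
proof -
  have "coeff (charpoly Y) CARD('n) \<noteq> 0"
    by (simp add: coeff_charpoly_card)
  then have "degree (charpoly Y) \<noteq> 0"
    using le_degree[of "charpoly Y" "CARD('n)"] zero_less_card_finite[where 'a='n] by linarith
  then obtain c where "poly (charpoly Y) c = 0"
    by (metis constant_degree fundamental_theorem_of_algebra)
  then have "\<not> invertible (Y - mat c)"
    by (simp add: poly_charpoly invertible_det_nz)
  then obtain v where "v \<noteq> 0" "(Y - mat c) *v v = 0"
    using invertible_left_inverse matrix_left_invertible_ker by blast
  then show thesis
    using that by (simp add: matrix_vector_mult_diff_rdistrib mat_mult_vec)
qed

lemma irreducible_on_commuting_scalar:
  fixes Y :: "complex^'n^'n"
  assumes irr: "irreducible_on H r" and comm: "\<forall>h\<in>H. Y ** r h = r h ** Y"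
  obtains c where "Y = mat c"
proof -
  obtain c v where v: "v \<noteq> 0" "Y *v v = c *s v"
    by (rule complex_matrix_has_eigenvector)
  define W where "W = {w. Y *v w = c *s w}"
  have "csubspace_vec W"
    unfolding csubspace_vec_def W_def
    by (auto simp: matrix_vector_right_distrib vector_scalar_commute vector_add_ldistrib mult.commute)
  moreover have "r h *v w \<in> W" if "h \<in> H" "w \<in> W" for h w
  proof -
    have "Y *v (r h *v w) = r h *v (Y *v w)"
      using comm that(1) by (simp add: matrix_vector_mul_assoc)
    then show ?thesis
      using that(2) by (simp add: W_def vector_scalar_commute)
  qed
  ultimately have "W = {0} \<or> W = UNIV"
    using irr unfolding irreducible_on_def by blast
  then have "W = UNIV"
    using v by (auto simp: W_def)
  then have "Y = mat c"
    by (auto simp: matrix_eq mat_mult_vec W_def)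
  then show thesis ..
qed

lemma char_divide:
  assumes "is_char_on G D a" and "is_char_on G D b"
  shows "is_char_on G D (\<lambda>d. a d / b d)"
  using assms by (simp add: is_char_on_def)

lemma skew_commuting_scalar_root_of_unity:
  fixes X Y :: "'a::field^'n^'n"
  assumes "invertible X" and "invertible Y" and "Y ** X = smult_mat c (X ** Y)"
  shows "c ^ CARD('n) = 1"
proof -
  have "det Y * det X = c ^ CARD('n) * (det Y * det X)"
    using arg_cong[OF assms(3), of det] by (simp add: det_mul det_smult_mat mult.commute)
  moreover have "det Y * det X \<noteq> 0"
    using assms(1,2) by (simp add: invertible_det_nz)
  ultimately show ?thesis by simp
qed

context group
begin

lemma finite_rcosets_trans:
  assumes H: "subgroup H G" and D: "subgroup D G" "H \<subseteq> D"
    and fin_D: "finite (rcosets D)" and fin_HD: "finite ((#>) H ` D)"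
  shows "finite (rcosets H)"
proof -
  define rep where "rep C = (SOME y. y \<in> carrier G \<and> C = D #> y)" for C
  have rep: "rep (D #> x) \<in> carrier G \<and> D #> x = D #> rep (D #> x)" if "x \<in> carrier G" for x
    unfolding rep_def by (rule someI[where x = x]) (simp add: that)
  have "rcosets H \<subseteq> (\<lambda>(C, y). C #> y) ` ((#>) H ` D \<times> rep ` (rcosets D))"
  proof
    fix C assume "C \<in> rcosets H"
    then obtain x where x: "x \<in> carrier G" "C = H #> x"
      unfolding RCOSETS_def by blast
    define y where "y = rep (D #> x)"
    have y: "y \<in> carrier G" "x \<in> D #> y"
      using rep[OF x(1)] rcos_self[OF x(1) D(1)] by (auto simp: y_def)
    then obtain k where k: "k \<in> D" "x = k \<otimes> y"
      unfolding r_coset_def by blast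
    have "C = (H #> k) #> y"
      using x k y subgroup.mem_carrier[OF D(1) k(1)]
      by (simp add: coset_mult_assoc subgroup.subset[OF H])
    moreover have "y \<in> rep ` (rcosets D)"
      using x(1) by (auto simp: y_def RCOSETS_def)
    ultimately show "C \<in> (\<lambda>(C, y). C #> y) ` ((#>) H ` D \<times> rep ` (rcosets D))"
      using k(1) by blast
  qed
  moreover have "finite ((#>) H ` D \<times> rep ` (rcosets D))"
    using fin_D fin_HD by simp
  ultimately show ?thesis
    by (rule finite_subset[OF _ finite_imageI])
qed

lemma char_one:
  assumes "subgroup D G" "is_char_on G D chi"
  shows "chi \<one> = 1"
proof -
  have "chi (\<one> \<otimes> \<one>) = chi \<one> * chi \<one>" "chi \<one> \<noteq> 0"
    using assms(2) subgroup.one_closed[OF assms(1)] unfolding is_char_on_def by blast+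
  then show ?thesis by simp
qed

lemma char_inv:
  assumes D: "subgroup D G" and chi: "is_char_on G D chi" and d: "d \<in> D"
  shows "chi (inv d) = inverse (chi d)"
proof -
  have "chi (d \<otimes> inv d) = chi d * chi (inv d)" "chi d \<noteq> 0"
    using chi d subgroup.m_inv_closed[OF D d] unfolding is_char_on_def by auto
  moreover have "chi (d \<otimes> inv d) = 1"
    using char_one[OF D chi] subgroup.mem_carrier[OF D d] by simp
  ultimately show ?thesis by (simp add: field_simps)
qed

lemma subgroup_char_kernel:
  assumes D: "subgroup D G" and chi: "is_char_on G D chi"
  shows "subgroup {d \<in> D. chi d = 1} G"
proof (rule subgroupI)
  show "{d \<in> D. chi d = 1} \<noteq> {}"
    using char_one[OF assms] subgroup.one_closed[OF D] by blast
qed (use D chi char_inv[OF D chi] subgroup.subset[OF D] subgroup.m_closed[OF D]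
      subgroup.m_inv_closed[OF D] in \<open>auto simp: is_char_on_def\<close>)

lemma finite_rcosets_char_kernel:
  assumes D: "subgroup D G" and fin: "finite (rcosets D)"
    and chi: "is_char_on G D chi" and roots: "\<forall>d\<in>D. chi d ^ n = 1" and "n > 0"
  shows "finite (rcosets {d \<in> D. chi d = 1})"
proof -
  define H where "H = {d \<in> D. chi d = 1}"
  have H: "subgroup H G"
    unfolding H_def using subgroup_char_kernel[OF D chi] .
  define pre where "pre z = (SOME k. k \<in> D \<and> chi k = z)" for z
  have "H #> k = H #> pre (chi k)" if k: "k \<in> D" for k
  proof -
    have k': "pre (chi k) \<in> D" "chi (pre (chi k)) = chi k"
      using someI[of "\<lambda>k'. k' \<in> D \<and> chi k' = chi k"] k by (auto simp: pre_def)
    have "chi (k \<otimes> inv (pre (chi k))) = 1"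
      using chi k k' char_inv[OF D chi k'(1)] subgroup.m_inv_closed[OF D k'(1)]
      unfolding is_char_on_def by auto
    then have "k \<otimes> inv (pre (chi k)) \<in> H"
      using k k' D by (simp add: H_def subgroup.m_closed subgroup.m_inv_closed)
    then have "k \<in> H #> pre (chi k)"
      using k k' D H by (simp add: subgroup.rcos_module_rev[OF H] subgroup.mem_carrier is_group)
    then show ?thesis
      using k' D H by (metis repr_independence subgroup.mem_carrier)
  qed
  then have "(#>) H ` D \<subseteq> (\<lambda>z. H #> pre z) ` {z. z ^ n = 1}"
    using roots by auto
  moreover have "finite {z::complex. z ^ n = 1}"
    using finite_roots_unity[of n] \<open>n > 0\<close> by simp
  ultimately have "finite ((#>) H ` D)"
    by (meson finite_imageI finite_subset)
  moreover have "H \<subseteq> D"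
    by (auto simp: H_def)
  ultimately have "finite (rcosets H)"
    using finite_rcosets_trans[OF H D] fin by blast
  then show ?thesis
    by (simp add: H_def)
qed

lemma char_conj:
  assumes "D \<lhd> G" and chi: "is_char_on G D chi" and g: "g \<in> carrier G"
  shows "is_char_on G D (\<lambda>d. chi (g \<otimes> d \<otimes> inv g))"
proof -
  interpret D: normal D G by (rule assms(1))
  have "g \<otimes> (d1 \<otimes> d2) \<otimes> inv g = (g \<otimes> d1 \<otimes> inv g) \<otimes> (g \<otimes> d2 \<otimes> inv g)"
    if "d1 \<in> D" "d2 \<in> D" for d1 d2
  proof -
    have "inv g \<otimes> (g \<otimes> x) = x" if "x \<in> carrier G" for x
      using g that by (simp add: m_assoc[symmetric])
    moreover have "d1 \<in> carrier G" "d2 \<in> carrier G"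
      using that D.subset by auto
    ultimately show ?thesis
      using g by (simp add: m_assoc)
  qed
  then show ?thesis
    using chi g D.inv_op_closed2 unfolding is_char_on_def by (simp add: D.m_closed)
qed

lemma twisted_reps_skew_commute:
  assumes "D \<lhd> G" and rep1: "is_rep G r1" and rep2: "is_rep G r2"
    and chi: "is_char_on G D chi" and tw: "\<forall>d\<in>D. r1 d = twist r2 chi d"
    and g: "g \<in> carrier G" and d: "d \<in> D"
    and inv_left: "Bi ** r2 g = mat 1" and inv_right: "r2 g ** Bi = mat 1"
  shows "(Bi ** r1 g) ** r2 d = smult_mat (chi (g \<otimes> d \<otimes> inv g) / chi d) (r2 d ** (Bi ** r1 g))"
proof -
  interpret D: normal D G by (rule assms(1))
  define c where "c = g \<otimes> d \<otimes> inv g"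
  have c: "c \<in> D" "c \<otimes> g = g \<otimes> d"
    using D.inv_op_closed2[OF g d] g D.subset d by (auto simp: c_def m_assoc)
  have hom: "r (x \<otimes> y) = r x ** r y" if "is_rep G r" "x \<in> carrier G" "y \<in> carrier G" for r x y
    using that unfolding is_rep_def by blast
  have "r1 c ** r1 g = r1 g ** r1 d"
    using hom[OF rep1] c g d D.subset by (metis subsetD)
  then have twisted: "smult_mat (chi c) (r2 c ** r1 g) = smult_mat (chi d) (r1 g ** r2 d)"
    using tw c(1) d by (simp add: twist_eq_smult_mat smult_mat_mult_left smult_mat_mult_right)
  have "r2 c ** r2 g = r2 g ** r2 d"
    using hom[OF rep2] c g d D.subset by (metis subsetD)
  then have "r2 c = r2 g ** r2 d ** Bi"
    by (metis inv_right matrix_mul_assoc matrix_mul_rid)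
  with twisted have "Bi ** smult_mat (chi c) (r2 g ** r2 d ** Bi ** r1 g)
      = Bi ** smult_mat (chi d) (r1 g ** r2 d)"
    by simp
  then have "smult_mat (chi c) (r2 d ** (Bi ** r1 g)) = smult_mat (chi d) ((Bi ** r1 g) ** r2 d)"
    by (simp add: smult_mat_mult_right matrix_mul_assoc inv_left)
  then have "smult_mat (1 / chi d) (smult_mat (chi c) (r2 d ** (Bi ** r1 g)))
      = smult_mat (1 / chi d) (smult_mat (chi d) ((Bi ** r1 g) ** r2 d))"
    by simp
  moreover have "chi d \<noteq> 0"
    using chi d unfolding is_char_on_def by blast
  ultimately show ?thesis
    by (simp add: smult_mat_smult_mat c_def)
qed

lemma skew_commuting_matrix_scalar:
  fixes r1 r2 :: "'a \<Rightarrow> complex^'n^'n"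
  assumes D: "subgroup D G" and fin: "finite (rcosets D)"
    and rep2: "is_rep G r2" and tw: "\<forall>d\<in>D. r1 d = twist r2 chi d"
    and irr: "\<forall>D'. subgroup D' G \<and> finite (rcosets D') \<longrightarrow> irreducible_on D' r1"
    and mu: "is_char_on G D mu" and Y: "invertible Y"
    and skew: "\<And>d. d \<in> D \<Longrightarrow> Y ** r2 d = smult_mat (mu d) (r2 d ** Y)"
  obtains c where "Y = mat c"
proof -
  have roots: "\<forall>d\<in>D. mu d ^ CARD('n) = 1"
  proof
    fix d assume d: "d \<in> D"
    have "invertible (r2 d)"
      using rep2 subgroup.mem_carrier[OF D d] unfolding is_rep_def by blast
    then show "mu d ^ CARD('n) = 1"
      by (rule skew_commuting_scalar_root_of_unity[OF _ Y skew[OF d]])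
  qed
  define H where "H = {d \<in> D. mu d = 1}"
  have "subgroup H G" "finite (rcosets H)"
    unfolding H_def using subgroup_char_kernel[OF D mu]
      finite_rcosets_char_kernel[OF D fin mu roots] by simp_all
  then have "irreducible_on H r1"
    using irr by blast
  moreover have "\<forall>h\<in>H. Y ** r1 h = r1 h ** Y"
    using skew tw by (simp add: H_def twist_eq_smult_mat smult_mat_mult_left smult_mat_mult_right)
  ultimately show thesis
    using that by (rule irreducible_on_commuting_scalar)
qed

lemma twisted_reps_proportional:
  fixes r1 r2 :: "'a \<Rightarrow> complex^'n^'n"
  assumes D: "D \<lhd> G" and fin: "finite (rcosets D)"
    and rep1: "is_rep G r1" and rep2: "is_rep G r2"
    and chi: "is_char_on G D chi" and tw: "\<forall>d\<in>D. r1 d = twist r2 chi d"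
    and irr: "\<forall>D'. subgroup D' G \<and> finite (rcosets D') \<longrightarrow> irreducible_on D' r1"
    and g: "g \<in> carrier G"
  shows "\<exists>c. r1 g = smult_mat c (r2 g)"
proof -
  obtain Bi where inv_left: "Bi ** r2 g = mat 1" and inv_right: "r2 g ** Bi = mat 1"
    using rep2 g unfolding is_rep_def invertible_def by blast
  define Y where "Y = Bi ** r1 g"
  define mu where "mu d = chi (g \<otimes> d \<otimes> inv g) / chi d" for d
  have "invertible Bi"
    using inv_left inv_right unfolding invertible_def by blast
  moreover have "invertible (r1 g)"
    using rep1 g unfolding is_rep_def by blast
  ultimately have Y: "invertible Y"
    unfolding Y_def by (rule invertible_mult)
  have mu: "is_char_on G D mu"
    unfolding mu_def using char_divide[OF char_conj[OF D chi g] chi] .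
  have skew: "Y ** r2 d = smult_mat (mu d) (r2 d ** Y)" if "d \<in> D" for d
    unfolding Y_def mu_def
    using twisted_reps_skew_commute[OF D rep1 rep2 chi tw g that inv_left inv_right] .
  obtain c where "Y = mat c"
    by (rule skew_commuting_matrix_scalar[OF normal_imp_subgroup[OF D] fin rep2 tw irr mu Y skew])
  moreover have "r1 g = r2 g ** Y"
    unfolding Y_def by (simp add: matrix_mul_assoc inv_right)
  ultimately have "r1 g = smult_mat c (r2 g)"
    by (simp add: matrix_mul_mat)
  then show ?thesis ..
qed

lemma char_of_proportional_reps:
  assumes rep1: "is_rep G r1" and rep2: "is_rep G r2"
    and proportional: "\<And>g. g \<in> carrier G \<Longrightarrow> r1 g = smult_mat (psi g) (r2 g)"
  shows "is_char_on G (carrier G) psi"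
  unfolding is_char_on_def
proof (intro conjI ballI)
  fix g assume g: "g \<in> carrier G"
  have "det (r1 g) \<noteq> 0"
    using rep1 g by (simp add: is_rep_def invertible_det_nz)
  then show "psi g \<noteq> 0"
    using proportional g by (auto simp: det_smult_mat)
next
  fix g h assume g: "g \<in> carrier G" and h: "h \<in> carrier G"
  have hom1: "r1 (g \<otimes> h) = r1 g ** r1 h" and hom2: "r2 (g \<otimes> h) = r2 g ** r2 h"
    and inv: "invertible (r2 (g \<otimes> h))"
    using rep1 rep2 g h m_closed[OF g h] unfolding is_rep_def by blast+
  have "smult_mat (psi (g \<otimes> h)) (r2 (g \<otimes> h)) = r1 g ** r1 h"
    using proportional m_closed[OF g h] hom1 by simp
  also have "\<dots> = smult_mat (psi g * psi h) (r2 (g \<otimes> h))"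
    using proportional g h hom2
    by (simp add: smult_mat_mult_left smult_mat_mult_right smult_mat_smult_mat mult.commute)
  finally show "psi (g \<otimes> h) = psi g * psi h"
    by (rule smult_mat_cancel[OF inv])
qed

end

theorem lemma5p4:
  fixes G :: "('g, 'b) monoid_scheme"
    and D :: "'g set"
    and r1 r2 :: "'g \<Rightarrow> complex^'n^'n"
    and chi :: "'g \<Rightarrow> complex"
  assumes "group G"
    and "D \<lhd> G"
    and "finite (rcosets\<^bsub>G\<^esub> D)"
    and "is_rep G r1" and "is_rep G r2"
    and "is_char_on G D chi"
    and "\<forall>d\<in>D. r1 d = twist r2 chi d"
    and "\<forall>D'. subgroup D' G \<and> finite (rcosets\<^bsub>G\<^esub> D') \<longrightarrow> irreducible_on D' r1"
  shows "\<exists>psi. is_char_on G (carrier G) psi \<and> (\<forall>d\<in>D. psi d = chi d) \<and>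
           (\<forall>g\<in>carrier G. r1 g = twist r2 psi g)"
proof -
  interpret group G by (rule assms(1))
  define psi where "psi g = (SOME c. r1 g = smult_mat c (r2 g))" for g
  have psi: "r1 g = smult_mat (psi g) (r2 g)" if "g \<in> carrier G" for g
    unfolding psi_def using twisted_reps_proportional[OF assms(2-) that] by (rule someI_ex)
  have "is_char_on G (carrier G) psi"
    using char_of_proportional_reps[OF assms(4,5) psi] .
  moreover have "\<forall>d\<in>D. psi d = chi d"
  proof
    fix d assume "d \<in> D"
    then have d: "d \<in> carrier G"
      by (rule subgroup.mem_carrier[OF normal_imp_subgroup[OF assms(2)]])
    have inv: "invertible (r2 d)"
      using assms(5) d unfolding is_rep_def by blast
    have "smult_mat (psi d) (r2 d) = r1 d"
      using psi[OF d] by simp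
    also have "\<dots> = smult_mat (chi d) (r2 d)"
      using assms(7) \<open>d \<in> D\<close> by (simp add: twist_eq_smult_mat)
    finally show "psi d = chi d"
      by (rule smult_mat_cancel[OF inv])
  qed
  moreover have "\<forall>g\<in>carrier G. r1 g = twist r2 psi g"
    using psi by (simp add: twist_eq_smult_mat)
  ultimately show ?thesis
    by blast
qed

end
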